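(* Let $\Omega\in\mathcal{M}_{n,1}$ with encoded table $(k;a_1,\dots,a_n;b,\beta)$. There is a unique $\overline{\Omega}\in\mathcal{M}_{n,1}$ such that, with $\rho(x,y)=(y-1-x,y)$: the set of junctions of $\overline{\Omega}$ is the image under $\rho$ of the set of junctions of $\Omega$, the start vertex of the $S$-step of $\overline{\Omega}$ is the image under $\rho$ of the start vertex of the $S$-step of $\Omega$, and the end vertex of the $N$-step of $\overline{\Omega}$ is the image under $\rho$ of the end vertex of the $N$-step of $\Omega$. The table $(k;\overline{a}_1,\dots,\overline{a}_n;\overline{b},\overline{\beta})$ encoded by $\overline{\Omega}$ (with the same $k$) is given by $\overline{a}_i=i-1-a_i$ for $i\ne k-1$, $\overline{a}_{k-1}=k-2-a_k-b$, $\overline{b}=a_k-1-a_{k-1}$, $\overline{\beta}=a_k+b-a_{k-1}-\beta-1$.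
   Context: Mixed configurations: let $\mathcal{G}_n=\{(x,y)\in\mathbb{Z}^2: 0\le x<y\le n\}$. Steps are $E=(1,0)$, $F=(1,0)$ (a distinct letter from $E$ with the same displacement), $S=(0,-1)$, $N=(1,1)$. A mixed path is a lattice path all of whose vertices lie in $\mathcal{G}_n$, given as a word $LR$ where the Left part $L$ is a word in $\{S,E\}$ and the Right part $R$ is a word in $\{F,N\}$; the vertex where $L$ ends and $R$ begins is the junction. An order-$n$ mixed configuration is a sequence $(\omega_1,\dots,\omega_n)$ of mixed paths such that for some permutation $\sigma$ of $\{1,\dots,n\}$, $\omega_i$ starts at $(0,i)$ and ends at $(\sigma(i)-1,\sigma(i))$, the Left parts are pairwise vertex-disjoint, and the Right parts are pairwise vertex-disjoint. $\mathcal{M}_{n,s}$ is the set of order-$n$ mixed configurations containing exactly $s$ $N$-steps in total (an element of $\mathcal{M}_{n,1}$ then has exactly one $S$-step as well). Every $\Omega=(\omega_1,\dots,\omega_n)\in\mathcal{M}_{n,1}$ can be written uniquely in the form $\omega_i=E^{a_i}F^{i-1-a_i}$ for $i\notin\{k-1,k\}$, $\omega_{k-1}=E^{a_{k-1}}F^{\beta}NF^{k-2-a_{k-1}-\beta}$, $\omega_k=E^{a_k}SE^{b}F^{k-2-a_k-b}$, for non-negative integers $k,a_1,\dots,a_n,b,\beta$ (exponents denote repetition of steps); the sequence $(k;a_1,\dots,a_n;b,\beta)$ is called the table encoded by $\Omega$. *)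

theory Defs
  imports Main
begin

datatype step = E | F | S | N

type_synonym point = "int \<times> int"

fun disp :: "step \<Rightarrow> point" where
  "disp E = (1, 0)"
| "disp F = (1, 0)"
| "disp S = (0, -1)"
| "disp N = (1, 1)"

fun verts :: "point \<Rightarrow> step list \<Rightarrow> point list" where
  "verts p [] = [p]"
| "verts p (s # w) = p # verts (fst p + fst (disp s), snd p + snd (disp s)) w"

definition endpt :: "point \<Rightarrow> step list \<Rightarrow> point" where
  "endpt p w = last (verts p w)"

definition in_G :: "nat \<Rightarrow> point \<Rightarrow> bool" where
  "in_G n v \<longleftrightarrow> 0 \<le> fst v \<and> fst v < snd v \<and> snd v \<le> int n"

definition mixed_word :: "step list \<Rightarrow> bool" where
  "mixed_word w \<longleftrightarrow> (\<exists>L R. w = L @ R \<and> set L \<subseteq> {S, E} \<and> set R \<subseteq> {F, N})"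

definition leftpart :: "step list \<Rightarrow> step list" where
  "leftpart w = takeWhile (\<lambda>s. s = S \<or> s = E) w"

definition rightpart :: "step list \<Rightarrow> step list" where
  "rightpart w = dropWhile (\<lambda>s. s = S \<or> s = E) w"

(* the i-th path (1-based) of a configuration given as list of words; it starts at (0,i) *)
definition path :: "step list list \<Rightarrow> nat \<Rightarrow> step list" where
  "path \<Omega> i = \<Omega> ! (i - 1)"

definition start :: "nat \<Rightarrow> point" where
  "start i = (0, int i)"

definition junction :: "nat \<Rightarrow> step list \<Rightarrow> point" where
  "junction i w = endpt (start i) (leftpart w)"

definition left_verts :: "nat \<Rightarrow> step list \<Rightarrow> point set" where
  "left_verts i w = set (verts (start i) (leftpart w))"

definition right_verts :: "nat \<Rightarrow> step list \<Rightarrow> point set" where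
  "right_verts i w = set (verts (junction i w) (rightpart w))"

definition count_step :: "step \<Rightarrow> step list \<Rightarrow> nat" where
  "count_step s w = length (filter (\<lambda>x. x = s) w)"

definition mixed_config :: "nat \<Rightarrow> step list list \<Rightarrow> bool" where
  "mixed_config n \<Omega> \<longleftrightarrow>
     length \<Omega> = n \<and>
     (\<forall>i\<in>{1..n}. mixed_word (path \<Omega> i) \<and>
                  (\<forall>v\<in>set (verts (start i) (path \<Omega> i)). in_G n v)) \<and>
     (\<exists>\<sigma>. bij_betw \<sigma> {1..n} {1..n} \<and>
          (\<forall>i\<in>{1..n}. endpt (start i) (path \<Omega> i) = (int (\<sigma> i) - 1, int (\<sigma> i)))) \<and>
     (\<forall>i\<in>{1..n}. \<forall>j\<in>{1..n}. i \<noteq> j \<longrightarrow>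
        left_verts i (path \<Omega> i) \<inter> left_verts j (path \<Omega> j) = {} \<and>
        right_verts i (path \<Omega> i) \<inter> right_verts j (path \<Omega> j) = {})"

definition M :: "nat \<Rightarrow> nat \<Rightarrow> step list list set" where
  "M n s = {\<Omega>. mixed_config n \<Omega> \<and> (\<Sum>i=1..n. count_step N (path \<Omega> i)) = s}"

definition junctions :: "nat \<Rightarrow> step list list \<Rightarrow> point set" where
  "junctions n \<Omega> = {junction i (path \<Omega> i) | i. i \<in> {1..n}}"

(* start vertices of S-steps (a singleton for elements of M n 1) *)
definition S_starts :: "nat \<Rightarrow> step list list \<Rightarrow> point set" where
  "S_starts n \<Omega> = {verts (start i) (path \<Omega> i) ! p | i p.
       i \<in> {1..n} \<and> p < length (path \<Omega> i) \<and> path \<Omega> i ! p = S}"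

(* end vertices of N-steps (a singleton for elements of M n 1) *)
definition N_ends :: "nat \<Rightarrow> step list list \<Rightarrow> point set" where
  "N_ends n \<Omega> = {verts (start i) (path \<Omega> i) ! (p + 1) | i p.
       i \<in> {1..n} \<and> p < length (path \<Omega> i) \<and> path \<Omega> i ! p = N}"

definition rho :: "point \<Rightarrow> point" where
  "rho v = (snd v - 1 - fst v, snd v)"

definition rep :: "int \<Rightarrow> step \<Rightarrow> step list" where
  "rep m s = replicate (nat m) s"

definition encodes :: "nat \<Rightarrow> step list list \<Rightarrow> nat \<Rightarrow> (nat \<Rightarrow> int) \<Rightarrow> int \<Rightarrow> int \<Rightarrow> bool" where
  "encodes n \<Omega> k a b \<beta> \<longleftrightarrow>
     length \<Omega> = n \<and> 2 \<le> k \<and> k \<le> n \<and> 0 \<le> b \<and> 0 \<le> \<beta> \<and>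
     (\<forall>i\<in>{1..n}. 0 \<le> a i) \<and>
     (\<forall>i\<in>{1..n}. i \<noteq> k - 1 \<and> i \<noteq> k \<longrightarrow>
        int i - 1 - a i \<ge> 0 \<and> path \<Omega> i = rep (a i) E @ rep (int i - 1 - a i) F) \<and>
     int k - 2 - a (k - 1) - \<beta> \<ge> 0 \<and>
     path \<Omega> (k - 1) = rep (a (k - 1)) E @ rep \<beta> F @ [N] @ rep (int k - 2 - a (k - 1) - \<beta>) F \<and>
     int k - 2 - a k - b \<ge> 0 \<and>
     path \<Omega> k = rep (a k) E @ [S] @ rep b E @ rep (int k - 2 - a k - b) F"

end

theory Submission
  imports Defs "HOL-Combinatorics.Transposition"
begin

(* Every configuration in M n 1 is the configuration of its table: path i is the horizontal run
   E^(a i) F^(i - 1 - a i) on row i, except that path k steps down to row k - 1 after a k steps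
   and path k - 1 steps up to row k after a (k - 1) + beta steps.  Conversely a table gives a
   configuration in M n 1 exactly when the left parts of paths k - 1 and k, and their right parts
   on row k - 1, do not overlap: a (k - 1) < a k and a (k - 1) + beta < a k + b.  The junctions,
   the start of the S-step and the end of the N-step (the marks) determine the table.  The dual
   table of the statement again satisfies both inequalities, and its marks are the rho-images of
   those of Omega, rho exchanging the two junctions on row k - 1; so its configuration is the
   required one, and it is unique. *)

section \<open>Lattice paths\<close>

lemma verts_not_Nil: "verts p w \<noteq> []"
  by (cases w) auto

lemma endpt_Nil [simp]: "endpt p [] = p"
  by (simp add: endpt_def)

lemma endpt_Cons [simp]:
  "endpt p (s # w) = endpt (fst p + fst (disp s), snd p + snd (disp s)) w"
  by (simp add: endpt_def verts_not_Nil)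

lemma start_mem_verts: "p \<in> set (verts p w)"
  by (cases w) auto

lemma endpt_mem_verts: "endpt p w \<in> set (verts p w)"
  by (simp add: endpt_def verts_not_Nil)

lemma set_verts_append: "set (verts p (u @ v)) = set (verts p u) \<union> set (verts (endpt p u) v)"
  by (induction u arbitrary: p) (auto simp: start_mem_verts)

lemma nth_verts_append: "verts p (u @ v) ! length u = endpt p u"
proof (induction u arbitrary: p)
  case Nil
  then show ?case by (cases v) auto
qed simp

lemma count_step_Nil [simp]: "count_step s [] = 0"
  and count_step_Cons [simp]: "count_step s (x # w) = (if x = s then 1 else 0) + count_step s w"
  and count_step_append [simp]: "count_step s (u @ w) = count_step s u + count_step s w"
  and count_step_replicate [simp]: "count_step s (replicate m x) = (if x = s then m else 0)"
  by (simp_all add: count_step_def)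

lemma count_step_eq_0_iff: "count_step s w = 0 \<longleftrightarrow> s \<notin> set w"
  by (auto simp: count_step_def filter_empty_conv)

lemma endpt_eq:
  "endpt p w = (fst p + int (length w) - int (count_step S w),
                snd p + int (count_step N w) - int (count_step S w))"
proof (induction w arbitrary: p)
  case (Cons s w)
  then show ?case by (cases s) auto
qed simp

lemma set_verts_eq_left_right_verts:
  "set (verts (start i) w) = left_verts i w \<union> right_verts i w"
proof -
  have "w = leftpart w @ rightpart w"
    by (simp add: leftpart_def rightpart_def)
  then have "set (verts (start i) w) = set (verts (start i) (leftpart w @ rightpart w))"
    by simp
  then show ?thesis
    by (simp add: set_verts_append left_verts_def right_verts_def junction_def)
qed

lemma junction_mem_left_verts: "junction i w \<in> left_verts i w"
  by (simp add: junction_def left_verts_def endpt_mem_verts)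

lemma junction_mem_right_verts: "junction i w \<in> right_verts i w"
  by (simp add: right_verts_def start_mem_verts)

lemma mixed_configE:
  assumes "mixed_config n \<Omega>"
  obtains \<sigma> where "length \<Omega> = n" "bij_betw \<sigma> {1..n} {1..n}"
    "\<And>i. i \<in> {1..n} \<Longrightarrow> mixed_word (path \<Omega> i)"
    "\<And>i v. i \<in> {1..n} \<Longrightarrow> v \<in> set (verts (start i) (path \<Omega> i)) \<Longrightarrow> in_G n v"
    "\<And>i. i \<in> {1..n} \<Longrightarrow> endpt (start i) (path \<Omega> i) = (int (\<sigma> i) - 1, int (\<sigma> i))"
    "\<And>i j. i \<in> {1..n} \<Longrightarrow> j \<in> {1..n} \<Longrightarrow> i \<noteq> j \<Longrightarrow>
       left_verts i (path \<Omega> i) \<inter> left_verts j (path \<Omega> j) = {}"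
    "\<And>i j. i \<in> {1..n} \<Longrightarrow> j \<in> {1..n} \<Longrightarrow> i \<noteq> j \<Longrightarrow>
       right_verts i (path \<Omega> i) \<inter> right_verts j (path \<Omega> j) = {}"
  using assms unfolding mixed_config_def by (elim conjE exE) (rule that; blast)

lemma junction_notin_other_path:
  assumes "mixed_config n \<Omega>" "i \<in> {1..n}" "j \<in> {1..n}" "i \<noteq> j"
  shows "junction j (path \<Omega> j) \<notin> set (verts (start i) (path \<Omega> i))"
proof -
  obtain \<sigma> where
    "left_verts i (path \<Omega> i) \<inter> left_verts j (path \<Omega> j) = {}"
    "right_verts i (path \<Omega> i) \<inter> right_verts j (path \<Omega> j) = {}"
    using mixed_configE[OF assms(1)] assms(2-4) by metis
  then show ?thesis
    using junction_mem_left_verts junction_mem_right_verts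
    by (auto simp: set_verts_eq_left_right_verts)
qed

lemma set_verts_replicate_horizontal:
  assumes "s \<in> {E, F}"
  shows "set (verts (x, y) (replicate m s)) = {x..x + int m} \<times> {y}"
proof (induction m arbitrary: x)
  case (Suc m)
  have "disp s = (1, 0)"
    using assms by auto
  with Suc[of "x + 1"] show ?case
    by auto
qed auto

lemma two_letter_word:
  assumes "set L \<subseteq> {x, y}" "count_step x L \<le> 1"
  obtains a b where "L = replicate a y @ replicate (count_step x L) x @ replicate b y"
proof (cases "count_step x L = 0")
  case True
  then have "L = replicate (length L) y"
    using assms(1) by (auto simp: count_step_eq_0_iff intro: replicate_eqI)
  with True show ?thesis
    by (metis append.right_neutral append_Nil replicate_0 that)
next
  case False
  then have "x \<in> set L"
    by (simp add: count_step_eq_0_iff)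
  then obtain u v where L: "L = u @ x # v" and "x \<notin> set u"
    by (meson split_list_first)
  with assms have "x \<notin> set v"
    by (auto simp: count_step_eq_0_iff[symmetric])
  with \<open>x \<notin> set u\<close> assms(1) L have "u = replicate (length u) y" "v = replicate (length v) y"
    by (auto intro: replicate_eqI)
  with L assms False have "L = replicate (length u) y @ replicate (count_step x L) x @ replicate (length v) y"
    by (metis append_Cons append_Nil le_neq_implies_less less_one replicate_0 replicate_Suc One_nat_def)
  then show ?thesis
    by (rule that)
qed

lemma mixed_word_shape:
  assumes "mixed_word w" "count_step S w = s" "count_step N w = t" "s \<le> 1" "t \<le> 1"
  obtains a b c d where
    "w = replicate a E @ replicate s S @ replicate b E @ replicate c F @ replicate t N @ replicate d F"
proof -
  obtain L R where w: "w = L @ R" and L: "set L \<subseteq> {S, E}" and R: "set R \<subseteq> {N, F}"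
    using assms(1) by (auto simp: mixed_word_def)
  then have "count_step S L = s" "count_step N R = t"
    using assms(2,3) by (auto simp: count_step_eq_0_iff)
  moreover obtain a b where "L = replicate a E @ replicate (count_step S L) S @ replicate b E"
    using two_letter_word[OF L] assms(4) \<open>count_step S L = s\<close> by blast
  moreover obtain c d where "R = replicate c F @ replicate (count_step N R) N @ replicate d F"
    using two_letter_word[OF R] assms(5) \<open>count_step N R = t\<close> by blast
  ultimately show ?thesis
    using w that by simp
qed

lemma flat_word_shape:
  assumes "mixed_word w" "count_step S w = 0" "count_step N w = 0"
  obtains x y where "w = replicate x E @ replicate y F"
proof -
  obtain a b c d where "w = replicate a E @ replicate b E @ replicate c F @ replicate d F"
    using assms by (auto elim: mixed_word_shape)
  then show ?thesis
    using that[of "a + b" "c + d"] by (simp add: replicate_add)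
qed

lemma S_word_shape:
  assumes "mixed_word w" "count_step S w = 1" "count_step N w = 0"
  obtains a b c where "w = replicate a E @ [S] @ replicate b E @ replicate c F"
proof -
  obtain a b c d where "w = replicate a E @ [S] @ replicate b E @ replicate c F @ replicate d F"
    using assms by (auto elim: mixed_word_shape)
  then show ?thesis
    using that[of a b "c + d"] by (simp add: replicate_add)
qed

lemma N_word_shape:
  assumes "mixed_word w" "count_step S w = 0" "count_step N w = 1"
  obtains a \<beta> d where "w = replicate a E @ replicate \<beta> F @ [N] @ replicate d F"
proof -
  obtain a b \<beta> d where "w = replicate a E @ replicate b E @ replicate \<beta> F @ [N] @ replicate d F"
    using assms by (auto elim: mixed_word_shape)
  then show ?thesis
    using that[of "a + b"] by (simp add: replicate_add)
qed

lemma
  assumes "set L \<subseteq> {S, E}" "set R \<subseteq> {F, N}"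
  shows leftpart_append: "leftpart (L @ R) = L"
    and rightpart_append: "rightpart (L @ R) = R"
proof -
  have "takeWhile (\<lambda>s. s = S \<or> s = E) R = []" "dropWhile (\<lambda>s. s = S \<or> s = E) R = R"
    using assms(2) by (cases R; auto)+
  moreover have "\<And>s. s \<in> set L \<Longrightarrow> s = S \<or> s = E"
    using assms(1) by auto
  ultimately show "leftpart (L @ R) = L" "rightpart (L @ R) = R"
    by (auto simp: leftpart_def rightpart_def)
qed

lemma mixed_word_append: "set L \<subseteq> {S, E} \<Longrightarrow> set R \<subseteq> {F, N} \<Longrightarrow> mixed_word (L @ R)"
  by (auto simp: mixed_word_def)

section \<open>Configurations given by a table\<close>

definition valid_table :: "nat \<Rightarrow> nat \<Rightarrow> (nat \<Rightarrow> int) \<Rightarrow> int \<Rightarrow> int \<Rightarrow> bool" where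
  "valid_table n k a b \<beta> \<longleftrightarrow> 2 \<le> k \<and> k \<le> n \<and> 0 \<le> b \<and> 0 \<le> \<beta> \<and> (\<forall>i\<in>{1..n}. 0 \<le> a i) \<and>
     (\<forall>i\<in>{1..n}. i \<noteq> k - 1 \<and> i \<noteq> k \<longrightarrow> a i \<le> int i - 1) \<and>
     a (k - 1) + \<beta> \<le> int k - 2 \<and> a k + b \<le> int k - 2"

definition table_left_word :: "nat \<Rightarrow> (nat \<Rightarrow> int) \<Rightarrow> int \<Rightarrow> nat \<Rightarrow> step list" where
  "table_left_word k a b i = (if i = k then rep (a i) E @ [S] @ rep b E else rep (a i) E)"

definition table_right_word :: "nat \<Rightarrow> (nat \<Rightarrow> int) \<Rightarrow> int \<Rightarrow> int \<Rightarrow> nat \<Rightarrow> step list" where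
  "table_right_word k a b \<beta> i =
     (if i = k - 1 then rep \<beta> F @ [N] @ rep (int k - 2 - a i - \<beta>) F
      else if i = k then rep (int k - 2 - a i - b) F
      else rep (int i - 1 - a i) F)"

definition table_path :: "nat \<Rightarrow> (nat \<Rightarrow> int) \<Rightarrow> int \<Rightarrow> int \<Rightarrow> nat \<Rightarrow> step list" where
  "table_path k a b \<beta> i = table_left_word k a b i @ table_right_word k a b \<beta> i"

definition table_config :: "nat \<Rightarrow> nat \<Rightarrow> (nat \<Rightarrow> int) \<Rightarrow> int \<Rightarrow> int \<Rightarrow> step list list" where
  "table_config n k a b \<beta> = map (table_path k a b \<beta>) [1..<Suc n]"

lemma length_table_config [simp]: "length (table_config n k a b \<beta>) = n"
  by (simp add: table_config_def)

lemma path_table_config: "i \<in> {1..n} \<Longrightarrow> path (table_config n k a b \<beta>) i = table_path k a b \<beta> i"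
  by (auto simp: path_def table_config_def simp del: upt_Suc)

lemma map_path_eq: "map (path \<Omega>) [1..<Suc (length \<Omega>)] = \<Omega>"
  by (rule nth_equalityI) (auto simp: path_def simp del: upt_Suc)

lemma encodes_iff: "encodes n \<Omega> k a b \<beta> \<longleftrightarrow> valid_table n k a b \<beta> \<and> \<Omega> = table_config n k a b \<beta>"
proof
  assume enc: "encodes n \<Omega> k a b \<beta>"
  have path: "path \<Omega> i = table_path k a b \<beta> i" if "i \<in> {1..n}" for i
    using enc that by (auto simp: encodes_def table_path_def table_left_word_def table_right_word_def)
  have "\<Omega> = map (path \<Omega>) [1..<Suc (length \<Omega>)]"
    by (rule map_path_eq[symmetric])
  also have "length \<Omega> = n"
    using enc by (simp add: encodes_def)
  also have "map (path \<Omega>) [1..<Suc n] = table_config n k a b \<beta>"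
    unfolding table_config_def by (rule map_cong) (auto simp: path simp del: upt_Suc)
  finally have "\<Omega> = table_config n k a b \<beta>" .
  with enc show "valid_table n k a b \<beta> \<and> \<Omega> = table_config n k a b \<beta>"
    by (auto simp: encodes_def valid_table_def)
next
  assume "valid_table n k a b \<beta> \<and> \<Omega> = table_config n k a b \<beta>"
  moreover from this have "k - 1 \<in> {1..n}" "k \<in> {1..n}"
    by (auto simp: valid_table_def)
  ultimately show "encodes n \<Omega> k a b \<beta>"
    by (auto simp: encodes_def valid_table_def path_table_config table_path_def
        table_left_word_def table_right_word_def)
qed

lemma
  shows leftpart_table_path: "leftpart (table_path k a b \<beta> i) = table_left_word k a b i"
    and rightpart_table_path: "rightpart (table_path k a b \<beta> i) = table_right_word k a b \<beta> i"
    and mixed_word_table_path: "mixed_word (table_path k a b \<beta> i)"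
proof -
  have "set (table_left_word k a b i) \<subseteq> {S, E}" "set (table_right_word k a b \<beta> i) \<subseteq> {F, N}"
    by (auto simp: table_left_word_def table_right_word_def rep_def)
  then show "leftpart (table_path k a b \<beta> i) = table_left_word k a b i"
    "rightpart (table_path k a b \<beta> i) = table_right_word k a b \<beta> i"
    "mixed_word (table_path k a b \<beta> i)"
    unfolding table_path_def by (simp_all add: leftpart_append rightpart_append mixed_word_append)
qed

definition table_left_verts :: "nat \<Rightarrow> (nat \<Rightarrow> int) \<Rightarrow> int \<Rightarrow> nat \<Rightarrow> point set" where
  "table_left_verts k a b i =
     (if i = k then {0..a i} \<times> {int i} \<union> {a i..a i + b} \<times> {int i - 1} else {0..a i} \<times> {int i})"

definition table_junction :: "nat \<Rightarrow> (nat \<Rightarrow> int) \<Rightarrow> int \<Rightarrow> nat \<Rightarrow> point" where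
  "table_junction k a b i = (if i = k then (a i + b, int i - 1) else (a i, int i))"

definition table_right_verts :: "nat \<Rightarrow> (nat \<Rightarrow> int) \<Rightarrow> int \<Rightarrow> int \<Rightarrow> nat \<Rightarrow> point set" where
  "table_right_verts k a b \<beta> i =
     (if i = k - 1 then {a i..a i + \<beta>} \<times> {int i} \<union> {a i + \<beta> + 1..int i} \<times> {int i + 1}
      else if i = k then {a i + b..int i - 2} \<times> {int i - 1}
      else {a i..int i - 1} \<times> {int i})"

lemma valid_table_entry_bounds:
  assumes "valid_table n k a b \<beta>" "i \<in> {1..n}"
  shows "0 \<le> a i" "i \<noteq> k - 1 \<Longrightarrow> i \<noteq> k \<Longrightarrow> a i \<le> int i - 1"
  using assms unfolding valid_table_def by auto

lemma valid_tableD: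
  assumes "valid_table n k a b \<beta>"
  shows "2 \<le> k" "k \<le> n" "0 \<le> b" "0 \<le> \<beta>" "k - 1 \<in> {1..n}" "k \<in> {1..n}" "k - 1 \<noteq> k"
    "int (k - 1) = int k - 1" "0 \<le> a (k - 1)" "0 \<le> a k"
    "a (k - 1) + \<beta> \<le> int k - 2" "a k + b \<le> int k - 2"
proof -
  show k: "k - 1 \<in> {1..n}" "k \<in> {1..n}"
    using assms by (auto simp: valid_table_def)
  show "0 \<le> a (k - 1)" "0 \<le> a k"
    using valid_table_entry_bounds(1)[OF assms k(1)] valid_table_entry_bounds(1)[OF assms k(2)] .
  show "2 \<le> k" "k \<le> n" "0 \<le> b" "0 \<le> \<beta>" "k - 1 \<noteq> k" "int (k - 1) = int k - 1"
    "a (k - 1) + \<beta> \<le> int k - 2" "a k + b \<le> int k - 2"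
    using assms by (auto simp: valid_table_def)
qed

lemma
  assumes "valid_table n k a b \<beta>" "i \<in> {1..n}"
  shows left_verts_table_path: "left_verts i (table_path k a b \<beta> i) = table_left_verts k a b i"
    and junction_table_path: "junction i (table_path k a b \<beta> i) = table_junction k a b i"
    and right_verts_table_path: "right_verts i (table_path k a b \<beta> i) = table_right_verts k a b \<beta> i"
    and endpt_table_path: "endpt (start i) (table_path k a b \<beta> i) =
      (int (Transposition.transpose (k - 1) k i) - 1, int (Transposition.transpose (k - 1) k i))"
    and count_step_S_table_path: "count_step S (table_path k a b \<beta> i) = (if i = k then 1 else 0)"
    and count_step_N_table_path: "count_step N (table_path k a b \<beta> i) = (if i = k - 1 then 1 else 0)"
proof -
  note ok = valid_tableD[OF assms(1)]
  note bounds = valid_table_entry_bounds[OF assms]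
  then show "left_verts i (table_path k a b \<beta> i) = table_left_verts k a b i"
    using ok 
    by (auto simp: left_verts_def leftpart_table_path table_left_word_def table_left_verts_def
        rep_def start_def set_verts_append set_verts_replicate_horizontal endpt_eq)
  show junction: "junction i (table_path k a b \<beta> i) = table_junction k a b i"
    using bounds ok
    by (auto simp: junction_def leftpart_table_path table_left_word_def table_junction_def
        rep_def start_def endpt_eq)
  show "right_verts i (table_path k a b \<beta> i) = table_right_verts k a b \<beta> i"
    using bounds ok assms(2)
    by (auto simp: right_verts_def rightpart_table_path table_right_word_def table_right_verts_def
        junction table_junction_def rep_def set_verts_append set_verts_replicate_horizontal endpt_eq)
  show "endpt (start i) (table_path k a b \<beta> i) =
      (int (Transposition.transpose (k - 1) k i) - 1, int (Transposition.transpose (k - 1) k i))"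
    using bounds ok assms(2)
    by (auto simp: table_path_def table_left_word_def table_right_word_def transpose_def
        rep_def start_def endpt_eq)
  show "count_step S (table_path k a b \<beta> i) = (if i = k then 1 else 0)"
    "count_step N (table_path k a b \<beta> i) = (if i = k - 1 then 1 else 0)"
    using ok by (auto simp: table_path_def table_left_word_def table_right_word_def rep_def)
qed

lemma junctions_table_config:
  assumes "valid_table n k a b \<beta>"
  shows "junctions n (table_config n k a b \<beta>) = table_junction k a b ` {1..n}"
proof -
  have "junctions n \<Omega> = (\<lambda>i. junction i (path \<Omega> i)) ` {1..n}" for \<Omega>
    by (auto simp: junctions_def)
  then show ?thesis
    using assms by (simp add: path_table_config junction_table_path)
qed

lemma marks_of_single_step:
  assumes "j \<in> I" "path \<Omega> j = u @ s # v" "s \<notin> set u" "s \<notin> set v"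
    and "\<And>i. i \<in> I \<Longrightarrow> i \<noteq> j \<Longrightarrow> s \<notin> set (path \<Omega> i)"
  shows "{verts (start i) (path \<Omega> i) ! (q + d) | i q. i \<in> I \<and> q < length (path \<Omega> i) \<and> path \<Omega> i ! q = s}
    = {verts (start j) (path \<Omega> j) ! (length u + d)}"
proof -
  have pos: "q < length (path \<Omega> j) \<and> path \<Omega> j ! q = s \<longleftrightarrow> q = length u" for q
    using assms(2-4) nth_mem[of "q - Suc (length u)" v] nth_mem[of q u]
    by (cases q "length u" rule: linorder_cases) (auto simp: nth_append)
  show ?thesis
  proof (intro equalityI subsetI)
    fix x
    assume "x \<in> {verts (start i) (path \<Omega> i) ! (q + d) | i q.
      i \<in> I \<and> q < length (path \<Omega> i) \<and> path \<Omega> i ! q = s}"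
    then obtain i q where "i \<in> I" "q < length (path \<Omega> i)" "path \<Omega> i ! q = s"
      "x = verts (start i) (path \<Omega> i) ! (q + d)"
      by blast
    moreover from this have "i = j" "q = length u"
      using assms(5) nth_mem pos by blast+
    ultimately show "x \<in> {verts (start j) (path \<Omega> j) ! (length u + d)}"
      by simp
  qed (use assms(1) pos in blast)
qed

lemma S_starts_table_config:
  assumes "valid_table n k a b \<beta>"
  shows "S_starts n (table_config n k a b \<beta>) = {(a k, int k)}"
proof -
  note ok = valid_tableD[OF assms]
  define u where "u = rep (a k) E"
  have path_k: "path (table_config n k a b \<beta>) k = u @ S # rep b E @ rep (int k - 2 - a k - b) F"
    using ok by (simp add: u_def path_table_config table_path_def table_left_word_def table_right_word_def)
  have "S \<notin> set (path (table_config n k a b \<beta>) i)" if "i \<in> {1..n}" "i \<noteq> k" for i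
    using that assms by (simp add: path_table_config count_step_S_table_path flip: count_step_eq_0_iff)
  then have "S_starts n (table_config n k a b \<beta>) = {verts (start k) (path (table_config n k a b \<beta>) k) ! length u}"
    using marks_of_single_step[OF \<open>k \<in> {1..n}\<close> path_k, where d = 0] unfolding S_starts_def
    by (simp add: u_def rep_def)
  also have "\<dots> = {endpt (start k) u}"
    unfolding path_k by (simp add: nth_verts_append)
  also have "\<dots> = {(a k, int k)}"
    using ok by (simp add: u_def rep_def start_def endpt_eq)
  finally show ?thesis .
qed

lemma N_ends_table_config:
  assumes "valid_table n k a b \<beta>"
  shows "N_ends n (table_config n k a b \<beta>) = {(a (k - 1) + \<beta> + 1, int k)}"
proof -
  note ok = valid_tableD[OF assms]
  define u where "u = rep (a (k - 1)) E @ rep \<beta> F"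
  have path_k: "path (table_config n k a b \<beta>) (k - 1) = u @ N # rep (int k - 2 - a (k - 1) - \<beta>) F"
    using ok by (simp add: u_def path_table_config table_path_def table_left_word_def table_right_word_def)
  have "N \<notin> set (path (table_config n k a b \<beta>) i)" if "i \<in> {1..n}" "i \<noteq> k - 1" for i
    using that assms by (simp add: path_table_config count_step_N_table_path flip: count_step_eq_0_iff)
  then have "N_ends n (table_config n k a b \<beta>) =
      {verts (start (k - 1)) (path (table_config n k a b \<beta>) (k - 1)) ! length (u @ [N])}"
    using marks_of_single_step[OF \<open>k - 1 \<in> {1..n}\<close> path_k, where d = 1] unfolding N_ends_def
    by (simp add: u_def rep_def)
  also have "\<dots> = {endpt (start (k - 1)) (u @ [N])}"
    unfolding path_k using nth_verts_append[of _ "u @ [N]"] by simp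
  also have "\<dots> = {(a (k - 1) + \<beta> + 1, int k)}"
    using ok by (simp add: u_def rep_def start_def endpt_eq)
  finally show ?thesis .
qed

lemma table_verts_in_G:
  assumes "valid_table n k a b \<beta>" "i \<in> {1..n}" "v \<in> table_left_verts k a b i \<union> table_right_verts k a b \<beta> i"
  shows "in_G n v"
  using assms valid_tableD[OF assms(1)] valid_table_entry_bounds[OF assms(1,2)]
  by (auto simp: in_G_def table_left_verts_def table_right_verts_def split: if_splits)

lemma table_left_verts_disjoint:
  assumes "valid_table n k a b \<beta>" "a (k - 1) < a k" "i \<noteq> j"
  shows "table_left_verts k a b i \<inter> table_left_verts k a b j = {}"
proof -
  have "\<And>j. int j = int k - 1 \<Longrightarrow> j = k - 1"
    by linarith
  with assms valid_tableD[OF assms(1)] show ?thesis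
    by (auto simp: table_left_verts_def split: if_splits)
qed

lemma table_right_verts_disjoint:
  assumes "valid_table n k a b \<beta>" "a (k - 1) + \<beta> < a k + b" "i \<noteq> j"
  shows "table_right_verts k a b \<beta> i \<inter> table_right_verts k a b \<beta> j = {}"
proof -
  have "\<And>j. int j = int k - 1 \<Longrightarrow> j = k - 1" "\<And>j. int j + 1 = int k \<Longrightarrow> j = k - 1"
    by linarith+
  with assms valid_tableD[OF assms(1)] show ?thesis
    by (auto simp: table_right_verts_def split: if_splits)
qed

lemma table_config_in_M1_iff:
  assumes ok: "valid_table n k a b \<beta>"
  shows "table_config n k a b \<beta> \<in> M n 1 \<longleftrightarrow> a (k - 1) < a k \<and> a (k - 1) + \<beta> < a k + b"
    (is "?\<Omega> \<in> M n 1 \<longleftrightarrow> _")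
proof
  note k = valid_tableD[OF ok]
  assume "?\<Omega> \<in> M n 1"
  then have "left_verts k (path ?\<Omega> k) \<inter> left_verts (k - 1) (path ?\<Omega> (k - 1)) = {} \<and>
      right_verts k (path ?\<Omega> k) \<inter> right_verts (k - 1) (path ?\<Omega> (k - 1)) = {}"
    using k unfolding M_def mixed_config_def by blast
  then have L: "table_left_verts k a b k \<inter> table_left_verts k a b (k - 1) = {}"
    and R: "table_right_verts k a b \<beta> k \<inter> table_right_verts k a b \<beta> (k - 1) = {}"
    using ok k by (simp_all add: path_table_config left_verts_table_path right_verts_table_path)
  have ord1: "a (k - 1) < a k"
  proof (rule ccontr)
    assume "\<not> a (k - 1) < a k"
    then have "(a k, int k - 1) \<in> table_left_verts k a b k \<inter> table_left_verts k a b (k - 1)"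
      using k by (auto simp: table_left_verts_def)
    with L show False
      by blast
  qed
  moreover have "a (k - 1) + \<beta> < a k + b"
  proof (rule ccontr)
    assume "\<not> a (k - 1) + \<beta> < a k + b"
    then have "(a k + b, int k - 1) \<in> table_right_verts k a b \<beta> k \<inter> table_right_verts k a b \<beta> (k - 1)"
      using k ord1 by (auto simp: table_right_verts_def)
    with R show False
      by blast
  qed
  ultimately show "a (k - 1) < a k \<and> a (k - 1) + \<beta> < a k + b" ..
next
  note k = valid_tableD[OF ok]
  assume ord: "a (k - 1) < a k \<and> a (k - 1) + \<beta> < a k + b"
  have "mixed_config n ?\<Omega>"
    unfolding mixed_config_def
  proof (intro conjI ballI impI)
    fix i
    assume i: "i \<in> {1..n}"
    show "mixed_word (path ?\<Omega> i)"
      by (simp add: path_table_config[OF i] mixed_word_table_path)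
    fix v
    assume "v \<in> set (verts (start i) (path ?\<Omega> i))"
    then show "in_G n v"
      using table_verts_in_G[OF ok i] ok i
      by (simp add: set_verts_eq_left_right_verts path_table_config left_verts_table_path right_verts_table_path)
  next
    show "\<exists>\<sigma>. bij_betw \<sigma> {1..n} {1..n} \<and>
        (\<forall>i\<in>{1..n}. endpt (start i) (path ?\<Omega> i) = (int (\<sigma> i) - 1, int (\<sigma> i)))"
      using ok k by (intro exI[of _ "Transposition.transpose (k - 1) k"])
        (simp add: path_table_config endpt_table_path)
  next
    fix i j
    assume "i \<in> {1..n}" "j \<in> {1..n}" "i \<noteq> j"
    then show "left_verts i (path ?\<Omega> i) \<inter> left_verts j (path ?\<Omega> j) = {}"
      "right_verts i (path ?\<Omega> i) \<inter> right_verts j (path ?\<Omega> j) = {}"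
      using ok ord table_left_verts_disjoint table_right_verts_disjoint
      by (simp_all add: path_table_config left_verts_table_path right_verts_table_path)
  qed simp
  moreover have "(\<Sum>i=1..n. count_step N (path ?\<Omega> i)) = 1"
    using ok k by (simp add: path_table_config count_step_N_table_path)
  ultimately show "?\<Omega> \<in> M n 1"
    by (simp add: M_def)
qed

section \<open>Classification of the configurations with one \<open>N\<close>-step\<close>

lemma endpt_start_coords:
  assumes "endpt (start i) w = (int j - 1, int j)"
  shows "int (length w) - int (count_step S w) = int j - 1"
    "int i + int (count_step N w) - int (count_step S w) = int j"
  using assms by (simp_all add: endpt_eq start_def)

lemma sum_count_S_eq_sum_count_N:
  assumes "mixed_config n \<Omega>"
  shows "(\<Sum>i=1..n. count_step S (path \<Omega> i)) = (\<Sum>i=1..n. count_step N (path \<Omega> i))"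
proof -
  obtain \<sigma> where bij: "bij_betw \<sigma> {1..n} {1..n}"
    and ends: "\<And>i. i \<in> {1..n} \<Longrightarrow> endpt (start i) (path \<Omega> i) = (int (\<sigma> i) - 1, int (\<sigma> i))"
    using mixed_configE[OF assms] by metis
  have "(\<Sum>i=1..n. int i) = (\<Sum>i=1..n. int (\<sigma> i))"
    using sum.reindex_bij_betw[OF bij, of int] by simp
  also have "\<dots> = (\<Sum>i=1..n. int i + int (count_step N (path \<Omega> i)) - int (count_step S (path \<Omega> i)))"
    using endpt_start_coords(2)[OF ends] by simp
  finally have "int (\<Sum>i=1..n. count_step S (path \<Omega> i)) = int (\<Sum>i=1..n. count_step N (path \<Omega> i))"
    by (simp add: sum.distrib sum_subtractf)
  then show ?thesis
    by (simp only: of_nat_eq_iff)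
qed

lemma flat_path_shape:
  assumes "mixed_config n \<Omega>" "i \<in> {1..n}"
    and "count_step S (path \<Omega> i) = 0" "count_step N (path \<Omega> i) = 0"
  obtains x where "x < i" "path \<Omega> i = replicate x E @ replicate (i - 1 - x) F"
proof -
  obtain \<sigma> where "mixed_word (path \<Omega> i)"
    and end_i: "endpt (start i) (path \<Omega> i) = (int (\<sigma> i) - 1, int (\<sigma> i))"
    using mixed_configE[OF assms(1)] assms(2) by metis
  obtain x y where w: "path \<Omega> i = replicate x E @ replicate y F"
    using flat_word_shape[OF \<open>mixed_word (path \<Omega> i)\<close> assms(3,4)] by blast
  have "int (x + y) = int i - 1"
    using endpt_start_coords[OF end_i] assms(3,4) w by simp
  then have "x < i" "path \<Omega> i = replicate x E @ replicate (i - 1 - x) F"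
    using w by simp_all
  then show ?thesis
    by (rule that)
qed

text \<open>A path carrying both the \<open>S\<close>-step and the \<open>N\<close>-step would have its junction on row \<open>k - 1\<close>,
  which the flat path \<open>k - 1\<close> covers completely.\<close>

lemma no_path_with_S_and_N:
  assumes "mixed_config n \<Omega>" "k \<in> {1..n}"
    and "count_step S (path \<Omega> k) = 1" "count_step N (path \<Omega> k) = 1"
    and "\<And>i. i \<in> {1..n} \<Longrightarrow> i \<noteq> k \<Longrightarrow> count_step S (path \<Omega> i) = 0 \<and> count_step N (path \<Omega> i) = 0"
  shows False
proof -
  have "mixed_word (path \<Omega> k)"
    using mixed_configE[OF assms(1)] assms(2) by metis
  then obtain a b c d where
    w: "path \<Omega> k = (replicate a E @ [S] @ replicate b E) @ (replicate c F @ [N] @ replicate d F)"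
    using assms(3,4) by (auto elim: mixed_word_shape)
  have "leftpart (path \<Omega> k) = replicate a E @ [S] @ replicate b E"
    unfolding w by (rule leftpart_append) auto
  then have J: "junction k (path \<Omega> k) = (int a + int b, int k - 1)"
    by (simp add: junction_def endpt_eq start_def)
  then have "in_G n (junction k (path \<Omega> k))"
    using mixed_configE[OF assms(1)] assms(2) junction_mem_left_verts
    by (metis UnI1 set_verts_eq_left_right_verts)
  then have "int a + int b < int k - 1" and k1: "k - 1 \<in> {1..n}" "k - 1 \<noteq> k"
    using J assms(2) by (auto simp: in_G_def)
  then obtain x where "x < k - 1"
    "path \<Omega> (k - 1) = replicate x E @ replicate (k - 1 - 1 - x) F"
    using flat_path_shape[OF assms(1)] assms(5) by metis
  then have "junction k (path \<Omega> k) \<in> set (verts (start (k - 1)) (path \<Omega> (k - 1)))"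
    using J \<open>int a + int b < int k - 1\<close> k1
    by (auto simp: start_def set_verts_append set_verts_replicate_horizontal endpt_eq)
  with junction_notin_other_path[OF assms(1) k1(1) assms(2) k1(2)] show False ..
qed

lemma M1_S_N_counts:
  assumes "\<Omega> \<in> M n 1"
  obtains k where "2 \<le> k" "k \<le> n"
    "\<And>i. i \<in> {1..n} \<Longrightarrow> count_step S (path \<Omega> i) = (if i = k then 1 else 0)"
    "\<And>i. i \<in> {1..n} \<Longrightarrow> count_step N (path \<Omega> i) = (if i = k - 1 then 1 else 0)"
proof -
  have mc: "mixed_config n \<Omega>" and sum_N: "(\<Sum>i=1..n. count_step N (path \<Omega> i)) = 1"
    using assms by (auto simp: M_def)
  then have sum_S: "(\<Sum>i=1..n. count_step S (path \<Omega> i)) = 1"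
    using sum_count_S_eq_sum_count_N by simp
  obtain k where k: "k \<in> {1..n}" "count_step S (path \<Omega> k) = 1"
    and S0: "\<And>i. i \<in> {1..n} \<Longrightarrow> i \<noteq> k \<Longrightarrow> count_step S (path \<Omega> i) = 0"
    using sum_S by (subst (asm) sum_eq_1_iff) auto
  obtain j where j: "j \<in> {1..n}" "count_step N (path \<Omega> j) = 1"
    and N0: "\<And>i. i \<in> {1..n} \<Longrightarrow> i \<noteq> j \<Longrightarrow> count_step N (path \<Omega> i) = 0"
    using sum_N by (subst (asm) sum_eq_1_iff) auto
  obtain \<sigma> where bij: "bij_betw \<sigma> {1..n} {1..n}"
    and ends: "\<And>i. i \<in> {1..n} \<Longrightarrow> endpt (start i) (path \<Omega> i) = (int (\<sigma> i) - 1, int (\<sigma> i))"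
    using mixed_configE[OF mc] by metis
  note row = endpt_start_coords(2)[OF ends]
  have "j \<noteq> k"
    using no_path_with_S_and_N[OF mc k] j S0 N0 by blast
  then have "int (\<sigma> k) = int k - 1"
    using row[OF k(1)] k N0 by simp
  moreover have "\<sigma> k \<ge> 1"
    using bij_betw_apply[OF bij k(1)] by simp
  ultimately have "2 \<le> k" "k - 1 \<in> {1..n}"
    using k(1) by auto
  have "j = k - 1"
  proof (rule ccontr)
    assume "j \<noteq> k - 1"
    then have "int (\<sigma> (k - 1)) = int k - 1"
      using row \<open>k - 1 \<in> {1..n}\<close> S0 N0 \<open>2 \<le> k\<close> by force
    then have "\<sigma> (k - 1) = \<sigma> k"
      using \<open>int (\<sigma> k) = int k - 1\<close> by simp
    with bij_betw_imp_inj_on[OF bij] \<open>k - 1 \<in> {1..n}\<close> k(1) \<open>2 \<le> k\<close> show False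
      by (auto dest: inj_onD)
  qed
  with that \<open>2 \<le> k\<close> k j S0 N0 show ?thesis
    by auto
qed

lemma M1_encodes:
  assumes "\<Omega> \<in> M n 1"
  obtains k a b \<beta> where "encodes n \<Omega> k a b \<beta>"
proof -
  obtain k where k: "2 \<le> k" "k \<le> n"
    and cS: "\<And>i. i \<in> {1..n} \<Longrightarrow> count_step S (path \<Omega> i) = (if i = k then 1 else 0)"
    and cN: "\<And>i. i \<in> {1..n} \<Longrightarrow> count_step N (path \<Omega> i) = (if i = k - 1 then 1 else 0)"
    using M1_S_N_counts[OF assms] by blast
  have mc: "mixed_config n \<Omega>"
    using assms by (simp add: M_def)
  obtain \<sigma> where len: "length \<Omega> = n"
    and mixed: "\<And>i. i \<in> {1..n} \<Longrightarrow> mixed_word (path \<Omega> i)"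
    and ends: "\<And>i. i \<in> {1..n} \<Longrightarrow> endpt (start i) (path \<Omega> i) = (int (\<sigma> i) - 1, int (\<sigma> i))"
    using mixed_configE[OF mc] by metis
  have k1: "k - 1 \<in> {1..n}" "k \<in> {1..n}" "k - 1 \<noteq> k" "int (k - 1) = int k - 1"
    using k by auto
  note coords = endpt_start_coords[OF ends]
  have "count_step S (path \<Omega> k) = 1" "count_step N (path \<Omega> k) = 0"
    using cS[OF k1(2)] cN[OF k1(2)] k1 by simp_all
  moreover from this obtain a b c where path_k: "path \<Omega> k = replicate a E @ [S] @ replicate b E @ replicate c F"
    using S_word_shape[OF mixed[OF k1(2)]] by metis
  ultimately have c: "int k - 2 - int a - int b = int c"
    using coords[OF k1(2)] by simp
  have "count_step S (path \<Omega> (k - 1)) = 0" "count_step N (path \<Omega> (k - 1)) = 1"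
    using cS[OF k1(1)] cN[OF k1(1)] k1 by simp_all
  moreover from this obtain a' \<beta> d where
    path_k1: "path \<Omega> (k - 1) = replicate a' E @ replicate \<beta> F @ [N] @ replicate d F"
    using N_word_shape[OF mixed[OF k1(1)]] by metis
  ultimately have d: "int k - 2 - int a' - int \<beta> = int d"
    using coords[OF k1(1)] k1 by simp
  define A where "A = (\<lambda>i. int (count_step E (path \<Omega> i)))(k := int a)"
  have "encodes n \<Omega> k A (int b) (int \<beta>)"
    unfolding encodes_def
  proof (intro conjI ballI impI)
    fix i
    assume i: "i \<in> {1..n}"
    then show "0 \<le> A i"
      by (simp add: A_def)
    assume "i \<noteq> k - 1 \<and> i \<noteq> k"
    then have "count_step S (path \<Omega> i) = 0" "count_step N (path \<Omega> i) = 0"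
      using cS[OF i] cN[OF i] by simp_all
    then obtain y where "y < i" "path \<Omega> i = replicate y E @ replicate (i - 1 - y) F"
      by (rule flat_path_shape[OF mc i])
    then show "int i - 1 - A i \<ge> 0" "path \<Omega> i = rep (A i) E @ rep (int i - 1 - A i) F"
      using \<open>i \<noteq> k - 1 \<and> i \<noteq> k\<close> by (simp_all add: A_def rep_def nat_diff_distrib)
  next
    show "int k - 2 - A (k - 1) - int \<beta> \<ge> 0"
      "path \<Omega> (k - 1) = rep (A (k - 1)) E @ rep (int \<beta>) F @ [N] @ rep (int k - 2 - A (k - 1) - int \<beta>) F"
      using d k1 path_k1 by (simp_all add: A_def rep_def)
    show "int k - 2 - A k - int b \<ge> 0"
      "path \<Omega> k = rep (A k) E @ [S] @ rep (int b) E @ rep (int k - 2 - A k - int b) F"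
      using c k1 path_k by (simp_all add: A_def rep_def)
  qed (use len k in auto)
  then show ?thesis
    by (rule that)
qed

lemma table_config_cong:
  "(\<And>i. i \<in> {1..n} \<Longrightarrow> a' i = a i) \<Longrightarrow> table_config n k a' b \<beta> = table_config n k a b \<beta>"
  unfolding table_config_def table_path_def table_left_word_def table_right_word_def
  by (rule map_cong) auto

lemma table_junction_row:
  assumes "valid_table n k a b \<beta>" "i \<in> {1..n}"
  shows "{x. (x, int i) \<in> table_junction k a b ` {1..n}} =
    (if i = k - 1 then {a (k - 1), a k + b} else if i = k then {} else {a i})"
  using assms valid_tableD[OF assms(1)]
  by (auto simp: table_junction_def image_iff split: if_splits)

lemma M1_eq_of_marks:
  assumes "\<Omega> \<in> M n 1" "\<Omega>' \<in> M n 1"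
    and "junctions n \<Omega>' = junctions n \<Omega>" "S_starts n \<Omega>' = S_starts n \<Omega>" "N_ends n \<Omega>' = N_ends n \<Omega>"
  shows "\<Omega>' = \<Omega>"
proof -
  obtain k a b \<beta> where ok: "valid_table n k a b \<beta>" and \<Omega>: "\<Omega> = table_config n k a b \<beta>"
    using M1_encodes[OF assms(1)] encodes_iff by metis
  obtain k' a' b' \<beta>' where ok': "valid_table n k' a' b' \<beta>'" and \<Omega>': "\<Omega>' = table_config n k' a' b' \<beta>'"
    using M1_encodes[OF assms(2)] encodes_iff by metis
  have ord: "a (k - 1) < a k" and ord': "a' (k' - 1) < a' k'"
    using assms(1,2) table_config_in_M1_iff ok ok' \<Omega> \<Omega>' by blast+
  have "{(a' k', int k')} = {(a k, int k)}"
    using assms(4) S_starts_table_config[OF ok] S_starts_table_config[OF ok'] \<Omega> \<Omega>' by metis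
  then have k: "k' = k" and ak: "a' k = a k"
    by auto
  have N: "a' (k - 1) + \<beta>' = a (k - 1) + \<beta>"
    using assms(5) N_ends_table_config[OF ok] N_ends_table_config[OF ok'] \<Omega> \<Omega>' k by simp
  have J: "table_junction k a' b' ` {1..n} = table_junction k a b ` {1..n}"
    using assms(3) junctions_table_config[OF ok] junctions_table_config[OF ok'] \<Omega> \<Omega>' k by simp
  note row = table_junction_row[OF ok] table_junction_row[OF ok'[unfolded k]]
  have "{a' (k - 1), a' k + b'} = {a (k - 1), a k + b}"
    using row[OF valid_tableD(5)[OF ok]] J by simp
  then have ak1: "a' (k - 1) = a (k - 1)" and "b' = b"
    using ord ord' k ak valid_tableD(3)[OF ok'] by (auto simp: doubleton_eq_iff)
  moreover have "\<beta>' = \<beta>"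
    using N ak1 by simp
  moreover have "a' i = a i" if "i \<in> {1..n}" for i
    using row[OF that] J ak ak1 by (cases "i = k - 1 \<or> i = k") auto
  ultimately show ?thesis
    using \<Omega> \<Omega>' k table_config_cong by metis
qed

section \<open>The dual table\<close>

lemma
  fixes a :: "nat \<Rightarrow> int"
  assumes ok: "valid_table n k a b \<beta>" and ord: "a (k - 1) < a k" "a (k - 1) + \<beta> < a k + b"
    and a'_def: "a' = (\<lambda>i. if i = k - 1 then int k - 2 - a k - b else int i - 1 - a i)"
    and b'_def: "b' = a k - 1 - a (k - 1)"
    and \<beta>'_def: "\<beta>' = a k + b - a (k - 1) - \<beta> - 1"
  shows dual_valid_table: "valid_table n k a' b' \<beta>'"
    and dual_table_ord: "a' (k - 1) < a' k" "a' (k - 1) + \<beta>' < a' k + b'"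
    and dual_table_junctions: "table_junction k a' b' ` {1..n} = rho ` table_junction k a b ` {1..n}"
    and dual_table_S_start: "(a' k, int k) = rho (a k, int k)"
    and dual_table_N_end: "(a' (k - 1) + \<beta>' + 1, int k) = rho (a (k - 1) + \<beta> + 1, int k)"
proof -
  note k = valid_tableD[OF ok]
  have "0 \<le> a' i" if "i \<in> {1..n}" for i
    using valid_table_entry_bounds[OF ok that] k by (cases "i = k") (auto simp: a'_def)
  moreover have "a' i \<le> int i - 1" if "i \<in> {1..n}" "i \<noteq> k - 1" for i
    using valid_table_entry_bounds[OF ok that(1)] that(2) by (simp add: a'_def)
  ultimately show "valid_table n k a' b' \<beta>'"
    using k ord by (simp add: valid_table_def a'_def b'_def \<beta>'_def)
  show "a' (k - 1) < a' k" "a' (k - 1) + \<beta>' < a' k + b'"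
    using k by (simp_all add: a'_def b'_def \<beta>'_def)
  show "(a' k, int k) = rho (a k, int k)" "(a' (k - 1) + \<beta>' + 1, int k) = rho (a (k - 1) + \<beta> + 1, int k)"
    using k by (simp_all add: a'_def \<beta>'_def rho_def)
  \<comment> \<open>\<open>rho\<close> exchanges the junctions of paths \<open>k - 1\<close> and \<open>k\<close> on row \<open>k - 1\<close>\<close>
  have "rho (table_junction k a b i) = table_junction k a' b' (Transposition.transpose (k - 1) k i)" for i
    using k by (simp add: rho_def table_junction_def a'_def b'_def transpose_def)
  then have "rho ` table_junction k a b ` {1..n} = table_junction k a' b' ` Transposition.transpose (k - 1) k ` {1..n}"
    by (simp add: image_image)
  then show "table_junction k a' b' ` {1..n} = rho ` table_junction k a b ` {1..n}"
    using k by simp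
qed

theorem lemma5:
  fixes n k :: nat and \<Omega> :: "step list list" and a :: "nat \<Rightarrow> int" and b \<beta> :: int
  assumes "\<Omega> \<in> M n 1"
    and "encodes n \<Omega> k a b \<beta>"
  shows "(\<exists>!\<Omega>'. \<Omega>' \<in> M n 1 \<and> junctions n \<Omega>' = rho ` junctions n \<Omega> \<and>
                 S_starts n \<Omega>' = rho ` S_starts n \<Omega> \<and> N_ends n \<Omega>' = rho ` N_ends n \<Omega>)
       \<and> (\<forall>\<Omega>'. \<Omega>' \<in> M n 1 \<and> junctions n \<Omega>' = rho ` junctions n \<Omega> \<and>
                 S_starts n \<Omega>' = rho ` S_starts n \<Omega> \<and> N_ends n \<Omega>' = rho ` N_ends n \<Omega>
             \<longrightarrow> encodes n \<Omega>' k
                   (\<lambda>i. if i = k - 1 then int k - 2 - a k - b else int i - 1 - a i)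
                   (a k - 1 - a (k - 1))
                   (a k + b - a (k - 1) - \<beta> - 1))"
proof -
  have ok: "valid_table n k a b \<beta>" and \<Omega>: "\<Omega> = table_config n k a b \<beta>"
    using assms(2) by (simp_all add: encodes_iff)
  have ord: "a (k - 1) < a k" "a (k - 1) + \<beta> < a k + b"
    using assms(1) table_config_in_M1_iff[OF ok] \<Omega> by blast+
  define a' where "a' = (\<lambda>i. if i = k - 1 then int k - 2 - a k - b else int i - 1 - a i)"
  define b' where "b' = a k - 1 - a (k - 1)"
  define \<beta>' where "\<beta>' = a k + b - a (k - 1) - \<beta> - 1"
  define \<Omega>' where "\<Omega>' = table_config n k a' b' \<beta>'"
  note dual_defs = ok ord a'_def b'_def \<beta>'_def
  note dual = dual_valid_table[OF dual_defs] dual_table_ord[OF dual_defs] dual_table_junctions[OF dual_defs]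
    dual_table_S_start[OF dual_defs] dual_table_N_end[OF dual_defs]
  define P where "P X \<longleftrightarrow> X \<in> M n 1 \<and> junctions n X = rho ` junctions n \<Omega> \<and>
      S_starts n X = rho ` S_starts n \<Omega> \<and> N_ends n X = rho ` N_ends n \<Omega>" for X
  have "\<Omega>' \<in> M n 1"
    using table_config_in_M1_iff[OF dual(1)] dual(2,3) by (simp add: \<Omega>'_def)
  moreover have "junctions n \<Omega>' = rho ` junctions n \<Omega>" "S_starts n \<Omega>' = rho ` S_starts n \<Omega>"
    "N_ends n \<Omega>' = rho ` N_ends n \<Omega>"
    using dual \<Omega> ok by (simp_all add: \<Omega>'_def junctions_table_config S_starts_table_config N_ends_table_config)
  ultimately have "P \<Omega>'"
    by (simp add: P_def)
  have unique: "X = \<Omega>'" if "P X" for X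
    using M1_eq_of_marks[of \<Omega>' n X] that \<open>P \<Omega>'\<close> by (simp add: P_def)
  have "encodes n \<Omega>' k a' b' \<beta>'"
    using dual(1) by (simp add: encodes_iff \<Omega>'_def)
  then have "(\<exists>!X. P X) \<and> (\<forall>X. P X \<longrightarrow> encodes n X k a' b' \<beta>')"
    using \<open>P \<Omega>'\<close> unique by blast
  then show ?thesis
    unfolding P_def a'_def b'_def \<beta>'_def .
qed

end
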